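(* Let $G$ be a finite group, $\varphi\in\mathrm{Aut}(G)$, and $U$ a subgroup with $\Delta(G,\varphi)\leq U\leq G\times G$. Suppose that for some $i\in\{1,2\}$ we have (i) $k_i(U)\cap G'\neq 1$, and (ii) $k_i(U)\leq Z(G)$. Then $U$ is not extensible.
   Context: $\Delta(G,\varphi)=\{(g,\varphi(g)):g\in G\}$. For $U\leq G\times G$: $k_1(U)=\{g:(g,1)\in U\}$, $k_2(U)=\{h:(1,h)\in U\}$; such $U$ is a subdirect product of $G$ and $G$. $G'$ is the commutator subgroup, $Z(G)$ the center. An abelian group $A$ satisfies the Hypothesis (with set of primes $\pi$) if there is a unique set of primes $\pi$ such that for every $n\in\mathbb{N}$ the $n$-torsion part of $A$ is cyclic of order $n_\pi$ (the $\pi$-part of $n$). $U$ is $A$-extensible if every homomorphism $U\to A$ extends to a homomorphism $G\times G\to A$; $U$ is extensible if it is $A$-extensible for every abelian group $A$ satisfying the Hypothesis. *)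

theory Defs
  imports "HOL-Algebra.Algebra" "HOL-Computational_Algebra.Primes" "HOL-Analysis.Analysis"
begin

definition group_center :: "('a, 'b) monoid_scheme \<Rightarrow> 'a set" where
  "group_center G = {z \<in> carrier G. \<forall>g \<in> carrier G. z \<otimes>\<^bsub>G\<^esub> g = g \<otimes>\<^bsub>G\<^esub> z}"

definition twisted_diag :: "('a, 'b) monoid_scheme \<Rightarrow> ('a \<Rightarrow> 'a) \<Rightarrow> ('a \<times> 'a) set" where
  "twisted_diag G \<phi> = {(g, \<phi> g) | g. g \<in> carrier G}"

definition k1 :: "('a, 'b) monoid_scheme \<Rightarrow> ('a \<times> 'a) set \<Rightarrow> 'a set" where
  "k1 G U = {g \<in> carrier G. (g, \<one>\<^bsub>G\<^esub>) \<in> U}"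

definition k2 :: "('a, 'b) monoid_scheme \<Rightarrow> ('a \<times> 'a) set \<Rightarrow> 'a set" where
  "k2 G U = {h \<in> carrier G. (\<one>\<^bsub>G\<^esub>, h) \<in> U}"

definition pi_part :: "nat set \<Rightarrow> nat \<Rightarrow> nat" where
  "pi_part \<pi> n = (\<Prod>p \<in> prime_factors n \<inter> \<pi>. p ^ multiplicity p n)"

definition torsion_part :: "('c, 'd) monoid_scheme \<Rightarrow> nat \<Rightarrow> 'c set" where
  "torsion_part A n = {a \<in> carrier A. a [^]\<^bsub>A\<^esub> n = \<one>\<^bsub>A\<^esub>}"

definition cyclic_of_order :: "('c, 'd) monoid_scheme \<Rightarrow> 'c set \<Rightarrow> nat \<Rightarrow> bool" where
  "cyclic_of_order A T m \<longleftrightarrow> finite T \<and> card T = m \<and>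
     (\<exists>g \<in> T. T = {g [^]\<^bsub>A\<^esub> (k::nat) | k. True})"

definition satisfies_hypothesis :: "('c, 'd) monoid_scheme \<Rightarrow> bool" where
  "satisfies_hypothesis A \<longleftrightarrow>
     (\<exists>!\<pi>::nat set. (\<forall>p \<in> \<pi>. Factorial_Ring.prime p) \<and>
        (\<forall>n::nat. n \<ge> 1 \<longrightarrow> cyclic_of_order A (torsion_part A n) (pi_part \<pi> n)))"

definition A_extensible :: "('a, 'b) monoid_scheme \<Rightarrow> ('a \<times> 'a) set \<Rightarrow> ('c, 'd) monoid_scheme \<Rightarrow> bool" where
  "A_extensible G U A \<longleftrightarrow>
     (\<forall>f \<in> hom ((G \<times>\<times> G)\<lparr>carrier := U\<rparr>) A.
        \<exists>F \<in> hom (G \<times>\<times> G) A. \<forall>u \<in> U. F u = f u)"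

text \<open>Extensibility, with the abelian groups A ranging over groups whose elements
  live in the type 'c (the witness type is fixed in the statement).\<close>
definition extensible :: "'c itself \<Rightarrow> ('a, 'b) monoid_scheme \<Rightarrow> ('a \<times> 'a) set \<Rightarrow> bool" where
  "extensible (_::'c itself) G U \<longleftrightarrow>
     (\<forall>A :: 'c monoid. comm_group A \<and> satisfies_hypothesis A \<longrightarrow> A_extensible G U A)"

end

theory Submission
  imports Defs
begin

(* The witness A is the group of all complex roots of unity. It satisfies the Hypothesis with \<pi>
   the set of all primes, and it is divisible, so homomorphisms from a subgroup of a finite abelian
   group into A extend to the whole group; hence the characters of Z(G) separate its points.
   Suppose k\<^sub>1(U) \<subseteq> Z(G) and let \<psi> = \<phi>\<^sup>-\<^sup>1, so that (\<psi> h, h) \<in> U. Then (g, h) \<mapsto> g \<psi>(h)\<^sup>-\<^sup>1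
   maps U into k\<^sub>1(U), is a homomorphism U \<rightarrow> Z(G) because k\<^sub>1(U) is central, and fixes (z, 1) for
   z \<in> k\<^sub>1(U). For 1 \<noteq> z \<in> k\<^sub>1(U) \<inter> G' and a character \<theta> of Z(G) with \<theta>(z) \<noteq> 1, the composite
   U \<rightarrow> A takes the value \<theta>(z) \<noteq> 1 at (z, 1), whereas every homomorphism G \<times> G \<rightarrow> A kills G' \<times> 1.
   Swapping the two factors reduces the case of k\<^sub>2 to that of k\<^sub>1. *)

section \<open>Complex roots of unity\<close>

definition roots_of_unity :: "complex monoid" where
  "roots_of_unity = \<lparr>carrier = {z. \<exists>n>0. z ^ n = 1}, monoid.mult = (*), one = 1\<rparr>"

lemma roots_of_unity_simps [simp]:
  "carrier roots_of_unity = {z. \<exists>n>0. z ^ n = 1}"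
  "x \<otimes>\<^bsub>roots_of_unity\<^esub> y = x * y"
  "\<one>\<^bsub>roots_of_unity\<^esub> = 1"
  by (simp_all add: roots_of_unity_def)

lemma roots_of_unity_nat_pow [simp]: "x [^]\<^bsub>roots_of_unity\<^esub> (n::nat) = x ^ n"
  by (induct n) (simp_all add: mult.commute)

lemma comm_group_roots_of_unity: "comm_group roots_of_unity"
proof (rule comm_groupI)
  fix x y assume "x \<in> carrier roots_of_unity" "y \<in> carrier roots_of_unity"
  then obtain n m where "n > 0" "x ^ n = 1" "m > 0" "y ^ m = 1" by auto
  have "(x * y) ^ (n * m) = (x ^ n) ^ m * (y ^ m) ^ n"
    by (simp add: power_mult_distrib flip: power_mult) (simp add: mult.commute)
  then have "(x * y) ^ (n * m) = 1" using \<open>x ^ n = 1\<close> \<open>y ^ m = 1\<close> by simp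
  then show "x \<otimes>\<^bsub>roots_of_unity\<^esub> y \<in> carrier roots_of_unity"
    using \<open>n > 0\<close> \<open>m > 0\<close> by (auto intro!: exI[of _ "n * m"])
next
  fix x assume "x \<in> carrier roots_of_unity"
  then obtain n where n: "n > 0" "x ^ n = 1" by auto
  then have "x ^ (n - 1) * x = 1" by (metis Suc_diff_1 power_Suc2)
  moreover have "(x ^ (n - 1)) ^ n = 1"
    using n by (metis power_mult power_mult_distrib mult.commute power_one)
  ultimately show "\<exists>y\<in>carrier roots_of_unity. y \<otimes>\<^bsub>roots_of_unity\<^esub> x = \<one>\<^bsub>roots_of_unity\<^esub>"
    using n by auto
qed (auto simp: mult_ac)

definition divisible_group :: "('c, 'd) monoid_scheme \<Rightarrow> bool" where
  "divisible_group A \<longleftrightarrow> (\<forall>a \<in> carrier A. \<forall>n::nat. n > 0 \<longrightarrow> (\<exists>b \<in> carrier A. b [^]\<^bsub>A\<^esub> n = a))"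

lemma divisible_roots_of_unity: "divisible_group roots_of_unity"
  unfolding divisible_group_def
proof (intro ballI allI impI)
  fix a :: complex and n :: nat
  assume a: "a \<in> carrier roots_of_unity" and n: "n > 0"
  then obtain m where m: "m > 0" "a ^ m = 1" by auto
  then have "a \<noteq> 0" by (metis power_0_left zero_neq_one not_gr0)
  define b where "b = exp (Ln a / of_nat n)"
  have "b ^ n = exp (of_nat n * (Ln a / of_nat n))"
    unfolding b_def by (rule exp_of_nat_mult[symmetric])
  also have "\<dots> = a" using n \<open>a \<noteq> 0\<close> by simp
  finally have "b ^ n = a" .
  moreover from this have "b ^ (n * m) = 1" using m by (simp add: power_mult)
  ultimately show "\<exists>b \<in> carrier roots_of_unity. b [^]\<^bsub>roots_of_unity\<^esub> n = a"
    using n m by (auto intro!: exI[of _ "n * m"])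
qed

lemma exists_primitive_root_of_unity:
  assumes "m > 0" obtains a :: complex where "\<And>t::nat. a ^ t = 1 \<longleftrightarrow> m dvd t"
proof
  fix t :: nat
  have "exp (2 * of_real pi * \<i> / of_nat m) ^ t = exp (of_nat t * (2 * of_real pi * \<i> / of_nat m))"
    by (rule exp_of_nat_mult[symmetric])
  also have "\<dots> = exp (2 * of_real pi * \<i> * of_nat t / of_nat m)"
    by (simp add: algebra_simps)
  also have "\<dots> = 1 \<longleftrightarrow> m dvd t"
    using assms by (intro complex_root_unity_eq_1) simp
  finally show "exp (2 * of_real pi * \<i> / of_nat m) ^ t = 1 \<longleftrightarrow> m dvd t" .
qed

lemma torsion_part_roots_of_unity:
  "n \<ge> 1 \<Longrightarrow> torsion_part roots_of_unity n = {z. z ^ n = 1}"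
  unfolding torsion_part_def by (force simp: Suc_le_eq)

lemma cyclic_of_order_roots_of_unity:
  assumes "n \<ge> 1" shows "cyclic_of_order roots_of_unity (torsion_part roots_of_unity n) n"
proof -
  define g where "g = cis (2 * pi / real n)"
  have g: "g ^ k = cis (2 * pi * real k / real n)" for k
    unfolding g_def Complex.DeMoivre by (simp add: mult.commute)
  have "{z::complex. z ^ n = 1} = {g ^ k | k. True}"
  proof (intro equalityI subsetI)
    fix z :: complex assume "z \<in> {z. z ^ n = 1}"
    then obtain k where "z = cis (2 * pi * real k / real n)"
      using Complex.bij_betw_roots_unity[of n] assms unfolding bij_betw_def by auto
    then show "z \<in> {g ^ k | k. True}" unfolding g by blast
  next
    fix z assume "z \<in> {g ^ k | k. True}"
    moreover have "g ^ n = 1" using assms g[of n] by simp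
    ultimately show "z \<in> {z::complex. z ^ n = 1}"
      by (auto simp flip: power_mult simp: mult.commute[of _ n] power_mult)
  qed
  moreover have "g \<in> {z::complex. z ^ n = 1}" using assms g[of n] by simp
  moreover have "card {z::complex. z ^ n = 1} = n" using assms card_roots_unity_eq[of n] by simp
  moreover have "finite {z::complex. z ^ n = 1}" using assms by (intro finite_roots_unity) simp
  ultimately show ?thesis
    unfolding cyclic_of_order_def torsion_part_roots_of_unity[OF assms] roots_of_unity_nat_pow
    by meson
qed

lemma pi_part_all_primes: "n \<ge> 1 \<Longrightarrow> pi_part {p. Factorial_Ring.prime p} n = n"
proof -
  assume "n \<ge> 1"
  have "prime_factors n \<inter> {p. Factorial_Ring.prime p} = prime_factors n" by auto
  then show ?thesis unfolding pi_part_def using \<open>n \<ge> 1\<close> by (simp add: prod_prime_factors)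
qed

lemma pi_part_prime:
  "Factorial_Ring.prime p \<Longrightarrow> pi_part \<pi> p = (if p \<in> \<pi> then p else 1)"
  unfolding pi_part_def by (simp add: prime_prime_factors multiplicity_self)

lemma satisfies_hypothesis_roots_of_unity: "satisfies_hypothesis roots_of_unity"
  unfolding satisfies_hypothesis_def
proof (rule ex1I[of _ "{p. Factorial_Ring.prime p}"])
  show "(\<forall>p \<in> {p. Factorial_Ring.prime p}. Factorial_Ring.prime p) \<and>
    (\<forall>n::nat. n \<ge> 1 \<longrightarrow> cyclic_of_order roots_of_unity (torsion_part roots_of_unity n)
      (pi_part {p. Factorial_Ring.prime p} n))"
    by (simp add: cyclic_of_order_roots_of_unity pi_part_all_primes)
next
  fix \<pi> assume hyp: "(\<forall>p \<in> \<pi>. Factorial_Ring.prime p) \<and>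
    (\<forall>n::nat. n \<ge> 1 \<longrightarrow> cyclic_of_order roots_of_unity (torsion_part roots_of_unity n) (pi_part \<pi> n))"
  show "\<pi> = {p. Factorial_Ring.prime p}"
  proof (intro equalityI subsetI)
    fix p assume "p \<in> \<pi>"
    then show "p \<in> {p. Factorial_Ring.prime p}" using hyp by blast
  next
    fix p :: nat assume "p \<in> {p. Factorial_Ring.prime p}"
    then have p: "Factorial_Ring.prime p" by simp
    then have "p \<ge> 1" using prime_gt_1_nat[OF p] by simp
    then have "pi_part \<pi> p = card (torsion_part roots_of_unity p)"
      using hyp unfolding cyclic_of_order_def by simp
    also have "\<dots> = p"
      using \<open>p \<ge> 1\<close> by (simp add: torsion_part_roots_of_unity card_roots_unity_eq)
    finally show "p \<in> \<pi>"
      using pi_part_prime[OF p, of \<pi>] prime_gt_1_nat[OF p] by (auto split: if_splits)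
  qed
qed

section \<open>Extending homomorphisms into a divisible abelian group\<close>

lemma (in comm_group) mult_int_pow_add:
  assumes "x \<in> carrier G" "y \<in> carrier G" "z \<in> carrier G"
  shows "(y \<otimes> z) \<otimes> x [^] (j + k :: int) = (y \<otimes> x [^] j) \<otimes> (z \<otimes> x [^] k)"
  using assms by (simp add: int_pow_mult m_ac)

(* For abelian K this is the subgroup generated by H and x. *)
definition subgroup_adjoin :: "('a, 'b) monoid_scheme \<Rightarrow> 'a set \<Rightarrow> 'a \<Rightarrow> 'a set" where
  "subgroup_adjoin K H x = {y \<in> carrier K. \<exists>j::int. y \<otimes>\<^bsub>K\<^esub> x [^]\<^bsub>K\<^esub> j \<in> H}"

lemma insert_subset_subgroup_adjoin:
  assumes "group K" "subgroup H K" "x \<in> carrier K"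
  shows "insert x H \<subseteq> subgroup_adjoin K H x"
proof -
  interpret K: group K by fact
  have "x \<otimes>\<^bsub>K\<^esub> x [^]\<^bsub>K\<^esub> (- 1 :: int) \<in> H"
    using assms(3) subgroup.one_closed[OF assms(2)] by (simp add: K.int_pow_neg)
  moreover have "h \<otimes>\<^bsub>K\<^esub> x [^]\<^bsub>K\<^esub> (0 :: int) \<in> H" if "h \<in> H" for h
    using that subgroup.subset[OF assms(2)] by auto
  ultimately show ?thesis
    using assms(3) subgroup.subset[OF assms(2)] unfolding subgroup_adjoin_def by blast
qed

lemma subgroup_subgroup_adjoin:
  assumes K: "comm_group K" and H: "subgroup H K" and x: "x \<in> carrier K"
  shows "subgroup (subgroup_adjoin K H x) K"
proof -
  interpret K: comm_group K by fact
  show ?thesis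
  proof (rule K.subgroupI)
    show "subgroup_adjoin K H x \<subseteq> carrier K" unfolding subgroup_adjoin_def by blast
    show "subgroup_adjoin K H x \<noteq> {}"
      using insert_subset_subgroup_adjoin[OF K.is_group H x] by blast
  next
    fix y assume "y \<in> subgroup_adjoin K H x"
    then obtain j :: int where y: "y \<in> carrier K" "y \<otimes>\<^bsub>K\<^esub> x [^]\<^bsub>K\<^esub> j \<in> H"
      unfolding subgroup_adjoin_def by blast
    have "inv\<^bsub>K\<^esub> y \<otimes>\<^bsub>K\<^esub> x [^]\<^bsub>K\<^esub> (- j) = inv\<^bsub>K\<^esub> (y \<otimes>\<^bsub>K\<^esub> x [^]\<^bsub>K\<^esub> j)"
      using x y by (simp add: K.inv_mult K.int_pow_neg)
    then have "inv\<^bsub>K\<^esub> y \<otimes>\<^bsub>K\<^esub> x [^]\<^bsub>K\<^esub> (- j) \<in> H"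
      using subgroup.m_inv_closed[OF H y(2)] by simp
    then show "inv\<^bsub>K\<^esub> y \<in> subgroup_adjoin K H x"
      using y(1) unfolding subgroup_adjoin_def by blast
  next
    fix y z assume "y \<in> subgroup_adjoin K H x" "z \<in> subgroup_adjoin K H x"
    then obtain j k :: int where y: "y \<in> carrier K" "y \<otimes>\<^bsub>K\<^esub> x [^]\<^bsub>K\<^esub> j \<in> H"
      and z: "z \<in> carrier K" "z \<otimes>\<^bsub>K\<^esub> x [^]\<^bsub>K\<^esub> k \<in> H"
      unfolding subgroup_adjoin_def by blast
    have "(y \<otimes>\<^bsub>K\<^esub> z) \<otimes>\<^bsub>K\<^esub> x [^]\<^bsub>K\<^esub> (j + k) \<in> H"
      using K.mult_int_pow_add[OF x y(1) z(1)] subgroup.m_closed[OF H y(2) z(2)] by simp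
    then show "y \<otimes>\<^bsub>K\<^esub> z \<in> subgroup_adjoin K H x"
      using y(1) z(1) unfolding subgroup_adjoin_def by blast
  qed
qed

context
  fixes K :: "('a, 'b) monoid_scheme" and A :: "('c, 'd) monoid_scheme"
    and H :: "'a set" and f :: "'a \<Rightarrow> 'c" and x :: 'a and a :: 'c
  assumes K: "comm_group K" and A: "comm_group A"
    and H: "subgroup H K" and f: "f \<in> hom (K\<lparr>carrier := H\<rparr>) A"
    and x: "x \<in> carrier K" and a: "a \<in> carrier A"
    and compat: "\<And>t::int. x [^]\<^bsub>K\<^esub> t \<in> H \<Longrightarrow> f (x [^]\<^bsub>K\<^esub> t) = a [^]\<^bsub>A\<^esub> t"
begin

definition adjoin_extension :: "'a \<Rightarrow> 'c" where
  "adjoin_extension y = (let j = SOME j::int. y \<otimes>\<^bsub>K\<^esub> x [^]\<^bsub>K\<^esub> j \<in> H in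
    f (y \<otimes>\<^bsub>K\<^esub> x [^]\<^bsub>K\<^esub> j) \<otimes>\<^bsub>A\<^esub> a [^]\<^bsub>A\<^esub> (- j))"

lemma adjoin_extension_eq:
  fixes j :: int
  assumes y: "y \<in> carrier K" and j: "y \<otimes>\<^bsub>K\<^esub> x [^]\<^bsub>K\<^esub> j \<in> H"
  shows "adjoin_extension y = f (y \<otimes>\<^bsub>K\<^esub> x [^]\<^bsub>K\<^esub> j) \<otimes>\<^bsub>A\<^esub> a [^]\<^bsub>A\<^esub> (- j)"
proof -
  interpret K: comm_group K by (rule K)
  interpret A: comm_group A by (rule A)
  define i where "i = (SOME i::int. y \<otimes>\<^bsub>K\<^esub> x [^]\<^bsub>K\<^esub> i \<in> H)"
  have i: "y \<otimes>\<^bsub>K\<^esub> x [^]\<^bsub>K\<^esub> i \<in> H"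
    unfolding i_def using j by (rule someI)
  have split: "y \<otimes>\<^bsub>K\<^esub> x [^]\<^bsub>K\<^esub> j = (y \<otimes>\<^bsub>K\<^esub> x [^]\<^bsub>K\<^esub> i) \<otimes>\<^bsub>K\<^esub> x [^]\<^bsub>K\<^esub> (j - i)"
    using x y by (simp add: K.m_assoc flip: K.int_pow_mult)
  then have "x [^]\<^bsub>K\<^esub> (j - i) = inv\<^bsub>K\<^esub> (y \<otimes>\<^bsub>K\<^esub> x [^]\<^bsub>K\<^esub> i) \<otimes>\<^bsub>K\<^esub> (y \<otimes>\<^bsub>K\<^esub> x [^]\<^bsub>K\<^esub> j)"
    using x y by (simp add: K.inv_solve_left)
  then have "x [^]\<^bsub>K\<^esub> (j - i) \<in> H"
    using subgroup.m_closed[OF H subgroup.m_inv_closed[OF H i] j] by simp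
  then have "f (y \<otimes>\<^bsub>K\<^esub> x [^]\<^bsub>K\<^esub> j) = f (y \<otimes>\<^bsub>K\<^esub> x [^]\<^bsub>K\<^esub> i) \<otimes>\<^bsub>A\<^esub> a [^]\<^bsub>A\<^esub> (j - i)"
    using split hom_mult[OF f] i compat by simp
  moreover have "f (y \<otimes>\<^bsub>K\<^esub> x [^]\<^bsub>K\<^esub> i) \<in> carrier A"
    using hom_in_carrier[OF f] i by simp
  ultimately show ?thesis
    using a unfolding adjoin_extension_def i_def[symmetric] Let_def
    by (simp add: A.m_assoc flip: A.int_pow_mult)
qed

lemma hom_adjoin_extension: "adjoin_extension \<in> hom (K\<lparr>carrier := subgroup_adjoin K H x\<rparr>) A"
proof (rule homI)
  interpret K: comm_group K by (rule K)
  interpret A: comm_group A by (rule A)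
  have f_closed: "f h \<in> carrier A" if "h \<in> H" for h
    using hom_in_carrier[OF f] that by simp
  {
    fix y assume "y \<in> carrier (K\<lparr>carrier := subgroup_adjoin K H x\<rparr>)"
    then obtain j :: int where "y \<in> carrier K" "y \<otimes>\<^bsub>K\<^esub> x [^]\<^bsub>K\<^esub> j \<in> H"
      unfolding subgroup_adjoin_def by auto
    then show "adjoin_extension y \<in> carrier A" using adjoin_extension_eq f_closed a by simp
  next
    fix y z
    assume "y \<in> carrier (K\<lparr>carrier := subgroup_adjoin K H x\<rparr>)"
      "z \<in> carrier (K\<lparr>carrier := subgroup_adjoin K H x\<rparr>)"
    then obtain j k :: int where y: "y \<in> carrier K" "y \<otimes>\<^bsub>K\<^esub> x [^]\<^bsub>K\<^esub> j \<in> H"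
      and z: "z \<in> carrier K" "z \<otimes>\<^bsub>K\<^esub> x [^]\<^bsub>K\<^esub> k \<in> H"
      unfolding subgroup_adjoin_def by auto
    have "adjoin_extension (y \<otimes>\<^bsub>K\<^esub> z) =
        (f (y \<otimes>\<^bsub>K\<^esub> x [^]\<^bsub>K\<^esub> j) \<otimes>\<^bsub>A\<^esub> f (z \<otimes>\<^bsub>K\<^esub> x [^]\<^bsub>K\<^esub> k)) \<otimes>\<^bsub>A\<^esub>
        (a [^]\<^bsub>A\<^esub> (- j) \<otimes>\<^bsub>A\<^esub> a [^]\<^bsub>A\<^esub> (- k))"
      using adjoin_extension_eq[OF K.m_closed[OF y(1) z(1)], of "j + k"]
        K.mult_int_pow_add[OF x y(1) z(1), of j k] subgroup.m_closed[OF H y(2) z(2)]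
        hom_mult[OF f] y(2) z(2) A.int_pow_mult[OF a, of "- j" "- k"] by simp
    also have "\<dots> = adjoin_extension y \<otimes>\<^bsub>A\<^esub> adjoin_extension z"
      using adjoin_extension_eq[OF y] adjoin_extension_eq[OF z] f_closed[OF y(2)] f_closed[OF z(2)] a
      by (simp add: A.m_ac)
    finally show "adjoin_extension (y \<otimes>\<^bsub>K\<lparr>carrier := subgroup_adjoin K H x\<rparr>\<^esub> z) =
        adjoin_extension y \<otimes>\<^bsub>A\<^esub> adjoin_extension z" by simp
  }
qed

lemma adjoin_extension_on_subgroup:
  assumes h: "h \<in> H" shows "adjoin_extension h = f h"
proof -
  interpret K: comm_group K by (rule K)
  interpret A: comm_group A by (rule A)
  have "h \<in> carrier K" using h subgroup.subset[OF H] by auto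
  then show ?thesis
    using adjoin_extension_eq[of h 0] hom_in_carrier[OF f] h by simp
qed

lemma adjoin_extension_at_generator: "adjoin_extension x = a"
proof -
  interpret K: comm_group K by (rule K)
  interpret A: comm_group A by (rule A)
  have "f \<one>\<^bsub>K\<^esub> = \<one>\<^bsub>A\<^esub>"
    using hom_one[OF f K.subgroup_imp_group[OF H] A.is_group] by simp
  then show ?thesis
    using adjoin_extension_eq[OF x, of "-1"] subgroup.one_closed[OF H] x a by (simp add: K.int_pow_neg)
qed

lemma extend_hom_to_subgroup_adjoin:
  obtains f' where "f' \<in> hom (K\<lparr>carrier := subgroup_adjoin K H x\<rparr>) A"
    "\<And>h. h \<in> H \<Longrightarrow> f' h = f h" "f' x = a"
  using hom_adjoin_extension adjoin_extension_on_subgroup adjoin_extension_at_generator by blast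

end

lemma subgroup_exponent_exists:
  assumes K: "group K" "finite (carrier K)" and H: "subgroup H K" and x: "x \<in> carrier K"
  obtains m :: nat where "m > 0" "\<And>t::int. x [^]\<^bsub>K\<^esub> t \<in> H \<longleftrightarrow> int m dvd t"
proof -
  interpret K: group K by fact
  define m where "m = (LEAST m::nat. 0 < m \<and> x [^]\<^bsub>K\<^esub> m \<in> H)"
  have "0 < K.ord x \<and> x [^]\<^bsub>K\<^esub> K.ord x \<in> H"
    using K.ord_ge_1[OF K(2) x] subgroup.one_closed[OF H] x by simp
  then have "0 < m \<and> x [^]\<^bsub>K\<^esub> m \<in> H"
    unfolding m_def by (rule LeastI)
  then have m: "0 < m" "x [^]\<^bsub>K\<^esub> (int m) \<in> H" by (auto simp: int_pow_int)
  have m_least: "r = 0" if "r < m" "x [^]\<^bsub>K\<^esub> r \<in> H" for r :: nat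
    using not_less_Least[of r "\<lambda>m. 0 < m \<and> x [^]\<^bsub>K\<^esub> m \<in> H"] that unfolding m_def by auto
  have "x [^]\<^bsub>K\<^esub> t \<in> H \<longleftrightarrow> int m dvd t" for t :: int
  proof
    have pow_m: "x [^]\<^bsub>K\<^esub> (int m * q) \<in> H" for q
      using K.subgroup_int_pow_closed[OF H m(2), of q] by (simp add: K.int_pow_pow[OF x])
    {
      assume t: "x [^]\<^bsub>K\<^esub> t \<in> H"
      define r where "r = t mod int m"
      have r: "0 \<le> r" "r < int m" using m(1) by (simp_all add: r_def)
      have "x [^]\<^bsub>K\<^esub> r = inv\<^bsub>K\<^esub> (x [^]\<^bsub>K\<^esub> (int m * (t div int m))) \<otimes>\<^bsub>K\<^esub> x [^]\<^bsub>K\<^esub> t"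
        using x K.int_pow_mult[OF x, of "int m * (t div int m)" r]
        by (simp add: K.inv_solve_left r_def)
      then have "x [^]\<^bsub>K\<^esub> r \<in> H"
        using subgroup.m_closed[OF H subgroup.m_inv_closed[OF H pow_m] t] by simp
      then have "x [^]\<^bsub>K\<^esub> nat r \<in> H"
        using int_pow_int[of K x "nat r"] r(1) by simp
      then have "r = 0" using m_least[of "nat r"] r by linarith
      then show "int m dvd t" unfolding r_def by presburger
    }
    assume "int m dvd t"
    then show "x [^]\<^bsub>K\<^esub> t \<in> H" using pow_m by auto
  qed
  with m(1) show thesis by (rule that)
qed

lemma exists_compatible_value:
  assumes K: "group K" "finite (carrier K)" and A: "comm_group A" "divisible_group A"
    and H: "subgroup H K" and f: "f \<in> hom (K\<lparr>carrier := H\<rparr>) A" and x: "x \<in> carrier K"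
  obtains a where "a \<in> carrier A"
    "\<And>t::int. x [^]\<^bsub>K\<^esub> t \<in> H \<Longrightarrow> f (x [^]\<^bsub>K\<^esub> t) = a [^]\<^bsub>A\<^esub> t"
proof -
  interpret K: group K by fact
  interpret A: comm_group A by fact
  obtain m :: nat where m: "m > 0" "\<And>t::int. x [^]\<^bsub>K\<^esub> t \<in> H \<longleftrightarrow> int m dvd t"
    using subgroup_exponent_exists[OF K H x] by blast
  let ?y = "x [^]\<^bsub>K\<^esub> (int m)"
  have y: "?y \<in> H" using m(2) by simp
  then have "f ?y \<in> carrier A" using hom_in_carrier[OF f] by simp
  then obtain a where a: "a \<in> carrier A" "a [^]\<^bsub>A\<^esub> (int m) = f ?y"
    using A(2) m(1) unfolding divisible_group_def by (auto simp: int_pow_int)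
  show thesis
  proof (rule that[OF a(1)])
    fix t :: int assume "x [^]\<^bsub>K\<^esub> t \<in> H"
    then obtain q where t: "t = int m * q" using m(2) by blast
    have "f (x [^]\<^bsub>K\<^esub> t) = f (?y [^]\<^bsub>K\<lparr>carrier := H\<rparr>\<^esub> q)"
      using K.int_pow_consistent[OF H y, of q] by (simp add: t K.int_pow_pow[OF x])
    also have "\<dots> = f ?y [^]\<^bsub>A\<^esub> q"
      by (rule hom_int_pow[OF f _ K.subgroup_imp_group[OF H] A.is_group]) (simp add: y)
    also have "\<dots> = a [^]\<^bsub>A\<^esub> t"
      using A.int_pow_pow[OF a(1), of "int m" q] by (simp add: t a(2))
    finally show "f (x [^]\<^bsub>K\<^esub> t) = a [^]\<^bsub>A\<^esub> t" .
  qed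
qed

lemma extend_hom_from_subgroup:
  assumes K: "comm_group K" "finite (carrier K)" and A: "comm_group A" "divisible_group A"
    and H: "subgroup H K" and f: "f \<in> hom (K\<lparr>carrier := H\<rparr>) A"
  obtains F where "F \<in> hom K A" "\<And>h. h \<in> H \<Longrightarrow> F h = f h"
proof -
  interpret K: comm_group K by fact
  have "\<exists>F \<in> hom K A. \<forall>h \<in> H. F h = f h"
    using H f
  proof (induction "card (carrier K - H)" arbitrary: H f rule: less_induct)
    case less
    show ?case
    proof (cases "H = carrier K")
      case True
      then have "K\<lparr>carrier := H\<rparr> = K" by simp
      then show ?thesis using less.prems(2) by (intro bexI[of _ f]) auto
    next
      case False
      then obtain x where x: "x \<in> carrier K" "x \<notin> H"
        using subgroup.subset[OF less.prems(1)] by blast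
      obtain a where a: "a \<in> carrier A"
        "\<And>t::int. x [^]\<^bsub>K\<^esub> t \<in> H \<Longrightarrow> f (x [^]\<^bsub>K\<^esub> t) = a [^]\<^bsub>A\<^esub> t"
        using exists_compatible_value[OF K.is_group K(2) A less.prems x(1)] by blast
      let ?H' = "subgroup_adjoin K H x"
      obtain f' where f': "f' \<in> hom (K\<lparr>carrier := ?H'\<rparr>) A" "\<And>h. h \<in> H \<Longrightarrow> f' h = f h"
        using extend_hom_to_subgroup_adjoin[OF K(1) A(1) less.prems x(1) a] by blast
      have H': "subgroup ?H' K" "insert x H \<subseteq> ?H'"
        using subgroup_subgroup_adjoin[OF K(1) less.prems(1) x(1)]
          insert_subset_subgroup_adjoin[OF K.is_group less.prems(1) x(1)] by simp_all
      have "carrier K - ?H' \<subset> carrier K - H" using H'(2) x by blast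
      then have "card (carrier K - ?H') < card (carrier K - H)"
        using K(2) by (simp add: psubset_card_mono)
      then obtain F where F: "F \<in> hom K A" "\<forall>h \<in> ?H'. F h = f' h"
        using less.hyps H'(1) f'(1) by blast
      have "\<forall>h \<in> H. F h = f h" using F(2) H'(2) f'(2) by auto
      with F(1) show ?thesis by blast
    qed
  qed
  then show thesis using that by blast
qed

lemma exists_character_nontrivial_at:
  assumes K: "comm_group K" "finite (carrier K)" and z: "z \<in> carrier K" "z \<noteq> \<one>\<^bsub>K\<^esub>"
  obtains \<theta> where "\<theta> \<in> hom K roots_of_unity" "\<theta> z \<noteq> 1"
proof -
  interpret K: comm_group K by fact
  interpret R: comm_group roots_of_unity by (rule comm_group_roots_of_unity)
  have "K.ord z \<noteq> 1"
  proof
    assume "K.ord z = 1"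
    then have "z [^]\<^bsub>K\<^esub> (1::nat) = \<one>\<^bsub>K\<^esub>" using K.pow_ord_eq_1[OF z(1)] by simp
    then show False using z by simp
  qed
  have "K.ord z \<ge> 1" using K.ord_ge_1[OF K(2) z(1)] .
  then obtain a :: complex where a: "\<And>t::nat. a ^ t = 1 \<longleftrightarrow> K.ord z dvd t"
    using exists_primitive_root_of_unity[of "K.ord z"] by auto
  have "a \<noteq> 1" using a[of 1] \<open>K.ord z \<noteq> 1\<close> by auto
  have a_R: "a \<in> carrier roots_of_unity"
    using a[of "K.ord z"] \<open>K.ord z \<ge> 1\<close> by (auto intro!: exI[of _ "K.ord z"])
  have trivial: "(\<lambda>_. 1) \<in> hom (K\<lparr>carrier := {\<one>\<^bsub>K\<^esub>}\<rparr>) roots_of_unity"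
    by (rule homI) (auto intro: exI[of _ "1::nat"])
  have compat: "(\<lambda>_. 1) (z [^]\<^bsub>K\<^esub> t) = a [^]\<^bsub>roots_of_unity\<^esub> t"
    if t: "z [^]\<^bsub>K\<^esub> t \<in> {\<one>\<^bsub>K\<^esub>}" for t :: int
  proof -
    obtain q where "t = int (K.ord z) * q" using t K.int_pow_eq_id[OF z(1)] by auto
    then have "a [^]\<^bsub>roots_of_unity\<^esub> t = (a [^]\<^bsub>roots_of_unity\<^esub> K.ord z) [^]\<^bsub>roots_of_unity\<^esub> q"
      using R.int_pow_pow[OF a_R, of "int (K.ord z)" q] by (simp add: int_pow_int)
    then show ?thesis using a[of "K.ord z"] R.int_pow_one[of q] by simp
  qed
  let ?H' = "subgroup_adjoin K {\<one>\<^bsub>K\<^esub>} z"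
  obtain f' where f': "f' \<in> hom (K\<lparr>carrier := ?H'\<rparr>) roots_of_unity" "f' z = a"
    using extend_hom_to_subgroup_adjoin[OF K(1) comm_group_roots_of_unity K.triv_subgroup trivial z(1)
        a_R compat] by blast
  obtain \<theta> where \<theta>: "\<theta> \<in> hom K roots_of_unity" "\<And>h. h \<in> ?H' \<Longrightarrow> \<theta> h = f' h"
    using extend_hom_from_subgroup[OF K comm_group_roots_of_unity divisible_roots_of_unity
        subgroup_subgroup_adjoin[OF K(1) K.triv_subgroup z(1)] f'(1)] by blast
  have "z \<in> ?H'" using insert_subset_subgroup_adjoin[OF K.is_group K.triv_subgroup z(1)] by simp
  then have "\<theta> z \<noteq> 1" using \<theta>(2) f'(2) \<open>a \<noteq> 1\<close> by simp
  with \<theta>(1) show thesis by (rule that)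
qed

section \<open>Non-extensibility\<close>

lemma subgroup_group_center:
  assumes "group G" shows "subgroup (group_center G) G"
proof -
  interpret G: group G by fact
  show ?thesis
  proof (rule G.subgroupI)
    show "group_center G \<subseteq> carrier G" "group_center G \<noteq> {}"
      unfolding group_center_def by auto
  next
    fix a assume "a \<in> group_center G"
    then have a: "a \<in> carrier G" "\<And>g. g \<in> carrier G \<Longrightarrow> a \<otimes>\<^bsub>G\<^esub> g = g \<otimes>\<^bsub>G\<^esub> a"
      unfolding group_center_def by auto
    have "g \<otimes>\<^bsub>G\<^esub> inv\<^bsub>G\<^esub> a = inv\<^bsub>G\<^esub> a \<otimes>\<^bsub>G\<^esub> g" if g: "g \<in> carrier G" for g
    proof -
      have "a \<otimes>\<^bsub>G\<^esub> (g \<otimes>\<^bsub>G\<^esub> inv\<^bsub>G\<^esub> a) = (g \<otimes>\<^bsub>G\<^esub> a) \<otimes>\<^bsub>G\<^esub> inv\<^bsub>G\<^esub> a"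
        using a g by (simp flip: G.m_assoc)
      also have "\<dots> = g" using a(1) g by (simp add: G.m_assoc)
      finally have "a \<otimes>\<^bsub>G\<^esub> (g \<otimes>\<^bsub>G\<^esub> inv\<^bsub>G\<^esub> a) = g" .
      then show ?thesis using a(1) g by (simp add: G.inv_solve_left)
    qed
    then show "inv\<^bsub>G\<^esub> a \<in> group_center G" unfolding group_center_def using a(1) by simp
  next
    fix a b assume "a \<in> group_center G" "b \<in> group_center G"
    then have a: "a \<in> carrier G" "\<And>g. g \<in> carrier G \<Longrightarrow> a \<otimes>\<^bsub>G\<^esub> g = g \<otimes>\<^bsub>G\<^esub> a"
      and b: "b \<in> carrier G" "\<And>g. g \<in> carrier G \<Longrightarrow> b \<otimes>\<^bsub>G\<^esub> g = g \<otimes>\<^bsub>G\<^esub> b"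
      unfolding group_center_def by auto
    have "(a \<otimes>\<^bsub>G\<^esub> b) \<otimes>\<^bsub>G\<^esub> g = g \<otimes>\<^bsub>G\<^esub> (a \<otimes>\<^bsub>G\<^esub> b)" if g: "g \<in> carrier G" for g
    proof -
      have "(a \<otimes>\<^bsub>G\<^esub> b) \<otimes>\<^bsub>G\<^esub> g = a \<otimes>\<^bsub>G\<^esub> (g \<otimes>\<^bsub>G\<^esub> b)"
        using a(1) b g by (simp add: G.m_assoc)
      also have "\<dots> = (a \<otimes>\<^bsub>G\<^esub> g) \<otimes>\<^bsub>G\<^esub> b"
        using a(1) b(1) g by (simp add: G.m_assoc)
      also have "\<dots> = g \<otimes>\<^bsub>G\<^esub> (a \<otimes>\<^bsub>G\<^esub> b)"
        using a(1) b(1) g by (simp add: a(2)[OF g] G.m_assoc)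
      finally show ?thesis .
    qed
    then show "a \<otimes>\<^bsub>G\<^esub> b \<in> group_center G"
      unfolding group_center_def using a(1) b(1) by simp
  qed
qed

lemma comm_group_center:
  assumes "group G" shows "comm_group (G\<lparr>carrier := group_center G\<rparr>)"
proof (rule group.group_comm_groupI)
  show "group (G\<lparr>carrier := group_center G\<rparr>)"
    using group.subgroup_imp_group[OF assms subgroup_group_center[OF assms]] .
next
  fix x y
  assume "x \<in> carrier (G\<lparr>carrier := group_center G\<rparr>)" "y \<in> carrier (G\<lparr>carrier := group_center G\<rparr>)"
  then have "\<forall>g \<in> carrier G. x \<otimes>\<^bsub>G\<^esub> g = g \<otimes>\<^bsub>G\<^esub> x" "y \<in> carrier G"
    unfolding group_center_def by simp_all
  then show "x \<otimes>\<^bsub>G\<lparr>carrier := group_center G\<rparr>\<^esub> y = y \<otimes>\<^bsub>G\<lparr>carrier := group_center G\<rparr>\<^esub> x"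
    by simp
qed

lemma k1_projection_mem:
  assumes G: "group G" and U: "subgroup U (G \<times>\<times> G)" and \<psi>: "\<psi> \<in> hom G G"
    and graph: "\<And>h. h \<in> carrier G \<Longrightarrow> (\<psi> h, h) \<in> U"
    and u: "(g, h) \<in> U"
  shows "g \<otimes>\<^bsub>G\<^esub> inv\<^bsub>G\<^esub> \<psi> h \<in> k1 G U"
proof -
  interpret G: group G by fact
  have g: "g \<in> carrier G" and h: "h \<in> carrier G" "\<psi> h \<in> carrier G"
    using subgroup.subset[OF U] u hom_in_carrier[OF \<psi>] by auto
  have "inv\<^bsub>G \<times>\<times> G\<^esub> (\<psi> h, h) \<in> U"
    using subgroup.m_inv_closed[OF U graph[OF h(1)]] .
  then have "(inv\<^bsub>G\<^esub> \<psi> h, inv\<^bsub>G\<^esub> h) \<in> U"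
    using h by (simp add: inv_DirProd[OF G G])
  then have "(g, h) \<otimes>\<^bsub>G \<times>\<times> G\<^esub> (inv\<^bsub>G\<^esub> \<psi> h, inv\<^bsub>G\<^esub> h) \<in> U"
    by (rule subgroup.m_closed[OF U u])
  then show ?thesis
    using g h unfolding k1_def by simp
qed

lemma k1_projection_hom:
  assumes G: "group G" and U: "subgroup U (G \<times>\<times> G)" and \<psi>: "\<psi> \<in> hom G G"
    and graph: "\<And>h. h \<in> carrier G \<Longrightarrow> (\<psi> h, h) \<in> U"
    and central: "k1 G U \<subseteq> group_center G"
  shows "(\<lambda>(g, h). g \<otimes>\<^bsub>G\<^esub> inv\<^bsub>G\<^esub> \<psi> h)
    \<in> hom ((G \<times>\<times> G)\<lparr>carrier := U\<rparr>) (G\<lparr>carrier := group_center G\<rparr>)"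
proof -
  interpret G: group G by fact
  have U_G: "g \<in> carrier G" "h \<in> carrier G" if "(g, h) \<in> U" for g h
    using subgroup.subset[OF U] that by auto
  have \<psi>_G: "\<psi> h \<in> carrier G" if "h \<in> carrier G" for h
    using hom_in_carrier[OF \<psi>] that .
  have central_value: "g \<otimes>\<^bsub>G\<^esub> inv\<^bsub>G\<^esub> \<psi> h \<in> group_center G" if "(g, h) \<in> U" for g h
    using k1_projection_mem[OF G U \<psi> graph that] central by blast
  show ?thesis
  proof (rule homI)
    fix u assume "u \<in> carrier ((G \<times>\<times> G)\<lparr>carrier := U\<rparr>)"
    then show "(case u of (g, h) \<Rightarrow> g \<otimes>\<^bsub>G\<^esub> inv\<^bsub>G\<^esub> \<psi> h) \<in> carrier (G\<lparr>carrier := group_center G\<rparr>)"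
      using central_value by (auto split: prod.splits)
  next
    fix u v assume "u \<in> carrier ((G \<times>\<times> G)\<lparr>carrier := U\<rparr>)" "v \<in> carrier ((G \<times>\<times> G)\<lparr>carrier := U\<rparr>)"
    then obtain g1 h1 g2 h2 where u: "u = (g1, h1)" "(g1, h1) \<in> U" and v: "v = (g2, h2)" "(g2, h2) \<in> U"
      by (cases u, cases v) auto
    note G1 = U_G[OF u(2)] \<psi>_G[OF U_G(2)[OF u(2)]] and G2 = U_G[OF v(2)] \<psi>_G[OF U_G(2)[OF v(2)]]
    let ?z = "g2 \<otimes>\<^bsub>G\<^esub> inv\<^bsub>G\<^esub> \<psi> h2"
    have "(g1 \<otimes>\<^bsub>G\<^esub> g2) \<otimes>\<^bsub>G\<^esub> inv\<^bsub>G\<^esub> \<psi> (h1 \<otimes>\<^bsub>G\<^esub> h2) =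
        g1 \<otimes>\<^bsub>G\<^esub> (?z \<otimes>\<^bsub>G\<^esub> inv\<^bsub>G\<^esub> \<psi> h1)"
      using G1 G2 by (simp add: hom_mult[OF \<psi>] G.inv_mult_group G.m_assoc)
    also have "?z \<otimes>\<^bsub>G\<^esub> inv\<^bsub>G\<^esub> \<psi> h1 = inv\<^bsub>G\<^esub> \<psi> h1 \<otimes>\<^bsub>G\<^esub> ?z"
      using central_value[OF v(2)] G1 unfolding group_center_def by auto
    also have "g1 \<otimes>\<^bsub>G\<^esub> (inv\<^bsub>G\<^esub> \<psi> h1 \<otimes>\<^bsub>G\<^esub> ?z) = (g1 \<otimes>\<^bsub>G\<^esub> inv\<^bsub>G\<^esub> \<psi> h1) \<otimes>\<^bsub>G\<^esub> ?z"
      using G1 G2 by (simp add: G.m_assoc)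
    finally have "(g1 \<otimes>\<^bsub>G\<^esub> g2) \<otimes>\<^bsub>G\<^esub> inv\<^bsub>G\<^esub> \<psi> (h1 \<otimes>\<^bsub>G\<^esub> h2) =
        (g1 \<otimes>\<^bsub>G\<^esub> inv\<^bsub>G\<^esub> \<psi> h1) \<otimes>\<^bsub>G\<^esub> ?z" .
    then show "(case u \<otimes>\<^bsub>(G \<times>\<times> G)\<lparr>carrier := U\<rparr>\<^esub> v of (g, h) \<Rightarrow> g \<otimes>\<^bsub>G\<^esub> inv\<^bsub>G\<^esub> \<psi> h) =
        (case u of (g, h) \<Rightarrow> g \<otimes>\<^bsub>G\<^esub> inv\<^bsub>G\<^esub> \<psi> h) \<otimes>\<^bsub>G\<lparr>carrier := group_center G\<rparr>\<^esub>
        (case v of (g, h) \<Rightarrow> g \<otimes>\<^bsub>G\<^esub> inv\<^bsub>G\<^esub> \<psi> h)"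
      using u v by simp
  qed
qed

lemma hom_DirProd_trivial_on_derived:
  assumes G: "group G" and H: "group H" and A: "comm_group A"
    and F: "F \<in> hom (G \<times>\<times> H) A" and z: "z \<in> derived G (carrier G)"
  shows "F (z, \<one>\<^bsub>H\<^esub>) = \<one>\<^bsub>A\<^esub>"
proof -
  interpret H: group H by fact
  interpret A: comm_group A by fact
  let ?F1 = "\<lambda>g. F (g, \<one>\<^bsub>H\<^esub>)"
  have "?F1 \<in> hom G A"
  proof (rule homI)
    fix g g' assume "g \<in> carrier G" "g' \<in> carrier G"
    then show "?F1 (g \<otimes>\<^bsub>G\<^esub> g') = ?F1 g \<otimes>\<^bsub>A\<^esub> ?F1 g'"
      using hom_mult[OF F, of "(g, \<one>\<^bsub>H\<^esub>)" "(g', \<one>\<^bsub>H\<^esub>)"] by simp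
  qed (use hom_in_carrier[OF F] in simp)
  then interpret F1: group_hom G A ?F1
    using G A.is_group by (simp add: group_hom_def group_hom_axioms_def)
  have "?F1 ` derived G (carrier G) = derived A (?F1 ` carrier G)"
    by (simp add: F1.derived_img)
  also have "\<dots> = {\<one>\<^bsub>A\<^esub>}"
    using F1.hom_closed by (intro A.derived_eq_singleton) auto
  finally show ?thesis using z by blast
qed

lemma hom_swap_DirProd: "prod.swap \<in> hom (G \<times>\<times> H) (H \<times>\<times> G)"
  by (rule homI) (auto simp: mem_Times_iff mult_DirProd')

lemma subgroup_swap:
  assumes G: "group G" and U: "subgroup U (G \<times>\<times> G)"
  shows "subgroup (prod.swap ` U) (G \<times>\<times> G)"
proof -
  have "group_hom (G \<times>\<times> G) (G \<times>\<times> G) prod.swap"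
    using DirProd_group[OF G G] hom_swap_DirProd by (simp add: group_hom_def group_hom_axioms_def)
  then show ?thesis using U by (rule group_hom.subgroup_img_is_subgroup)
qed

lemma A_extensible_swap:
  assumes "A_extensible G U A"
  shows "A_extensible G (prod.swap ` U) A"
  unfolding A_extensible_def
proof
  fix f assume f: "f \<in> hom ((G \<times>\<times> G)\<lparr>carrier := prod.swap ` U\<rparr>) A"
  have "f \<circ> prod.swap \<in> hom ((G \<times>\<times> G)\<lparr>carrier := U\<rparr>) A"
  proof (rule homI)
    fix u assume "u \<in> carrier ((G \<times>\<times> G)\<lparr>carrier := U\<rparr>)"
    then have "prod.swap u \<in> carrier ((G \<times>\<times> G)\<lparr>carrier := prod.swap ` U\<rparr>)" by simp
    then show "(f \<circ> prod.swap) u \<in> carrier A" using hom_in_carrier[OF f] by simp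
  next
    fix u v assume "u \<in> carrier ((G \<times>\<times> G)\<lparr>carrier := U\<rparr>)" "v \<in> carrier ((G \<times>\<times> G)\<lparr>carrier := U\<rparr>)"
    then have "prod.swap u \<in> carrier ((G \<times>\<times> G)\<lparr>carrier := prod.swap ` U\<rparr>)"
      "prod.swap v \<in> carrier ((G \<times>\<times> G)\<lparr>carrier := prod.swap ` U\<rparr>)" by simp_all
    from hom_mult[OF f this] show "(f \<circ> prod.swap) (u \<otimes>\<^bsub>(G \<times>\<times> G)\<lparr>carrier := U\<rparr>\<^esub> v) =
        (f \<circ> prod.swap) u \<otimes>\<^bsub>A\<^esub> (f \<circ> prod.swap) v"
      by (cases u, cases v) simp
  qed
  then obtain F where F: "F \<in> hom (G \<times>\<times> G) A" "\<forall>u \<in> U. F u = f (prod.swap u)"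
    using assms unfolding A_extensible_def by auto
  have "F \<circ> prod.swap \<in> hom (G \<times>\<times> G) A"
    using hom_swap_DirProd F(1) by (rule hom_compose)
  moreover have "\<forall>u \<in> prod.swap ` U. (F \<circ> prod.swap) u = f u"
    using F(2) by auto
  ultimately show "\<exists>F \<in> hom (G \<times>\<times> G) A. \<forall>u \<in> prod.swap ` U. F u = f u" by blast
qed

lemma k1_swap: "k1 G (prod.swap ` U) = k2 G U"
  unfolding k1_def k2_def by force

lemma twisted_diag_inv_into:
  assumes "\<phi> \<in> iso G G" "twisted_diag G \<phi> \<subseteq> U" "h \<in> carrier G"
  shows "(inv_into (carrier G) \<phi> h, h) \<in> U"
proof -
  have "\<phi> ` carrier G = carrier G" using assms(1) unfolding iso_def bij_betw_def by blast
  then show ?thesis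
    using assms(2,3) unfolding twisted_diag_def by (force simp: inv_into_into f_inv_into_f)
qed

lemma k1_central_not_A_extensible:
  assumes G: "group G" "finite (carrier G)" and U: "subgroup U (G \<times>\<times> G)"
    and \<psi>: "\<psi> \<in> hom G G" "\<And>h. h \<in> carrier G \<Longrightarrow> (\<psi> h, h) \<in> U"
    and nontrivial: "k1 G U \<inter> derived G (carrier G) \<noteq> {\<one>\<^bsub>G\<^esub>}"
    and central: "k1 G U \<subseteq> group_center G"
  shows "\<not> A_extensible G U roots_of_unity"
proof
  assume ext: "A_extensible G U roots_of_unity"
  interpret G: group G by fact
  have "\<one>\<^bsub>G\<^esub> \<in> k1 G U \<inter> derived G (carrier G)"
    using subgroup.one_closed[OF U] subgroup.one_closed[OF G.derived_is_subgroup[of "carrier G"]]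
    unfolding k1_def by auto
  then obtain z where z: "z \<in> k1 G U" "z \<in> derived G (carrier G)" "z \<noteq> \<one>\<^bsub>G\<^esub>"
    using nontrivial by blast
  then have z_G: "z \<in> carrier G" and z_U: "(z, \<one>\<^bsub>G\<^esub>) \<in> U" unfolding k1_def by auto
  let ?Z = "G\<lparr>carrier := group_center G\<rparr>"
  let ?f = "\<lambda>(g, h). g \<otimes>\<^bsub>G\<^esub> inv\<^bsub>G\<^esub> \<psi> h"
  have f: "?f \<in> hom ((G \<times>\<times> G)\<lparr>carrier := U\<rparr>) ?Z"
    by (rule k1_projection_hom[OF G(1) U \<psi> central])
  have f_z: "?f (z, \<one>\<^bsub>G\<^esub>) = z" using z_G hom_one[OF \<psi>(1) G(1) G(1)] by simp
  have "finite (carrier ?Z)" "z \<in> carrier ?Z" "z \<noteq> \<one>\<^bsub>?Z\<^esub>"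
    using G(2) z(1,3) central unfolding group_center_def by (auto intro: finite_subset)
  then obtain \<theta> where \<theta>: "\<theta> \<in> hom ?Z roots_of_unity" "\<theta> z \<noteq> 1"
    by (rule exists_character_nontrivial_at[OF comm_group_center[OF G(1)]])
  have "\<theta> \<circ> ?f \<in> hom ((G \<times>\<times> G)\<lparr>carrier := U\<rparr>) roots_of_unity"
    using f \<theta>(1) by (rule hom_compose)
  then obtain F where F: "F \<in> hom (G \<times>\<times> G) roots_of_unity" "\<forall>u \<in> U. F u = (\<theta> \<circ> ?f) u"
    using ext unfolding A_extensible_def by blast
  have "F (z, \<one>\<^bsub>G\<^esub>) = 1"
    using hom_DirProd_trivial_on_derived[OF G(1) G(1) comm_group_roots_of_unity F(1) z(2)] by simp
  with F(2) z_U f_z \<theta>(2) show False by simp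
qed

theorem corollary5p3:
  fixes G :: "('a, 'b) monoid_scheme" and \<phi> :: "'a \<Rightarrow> 'a" and U :: "('a \<times> 'a) set"
  assumes "group G" and "finite (carrier G)"
    and "\<phi> \<in> iso G G"
    and "subgroup U (G \<times>\<times> G)"
    and "twisted_diag G \<phi> \<subseteq> U"
    and "(k1 G U \<inter> derived G (carrier G) \<noteq> {\<one>\<^bsub>G\<^esub>} \<and> k1 G U \<subseteq> group_center G) \<or>
         (k2 G U \<inter> derived G (carrier G) \<noteq> {\<one>\<^bsub>G\<^esub>} \<and> k2 G U \<subseteq> group_center G)"
  shows "\<not> extensible TYPE(complex) G U"
proof
  assume "extensible TYPE(complex) G U"
  then have ext: "A_extensible G U roots_of_unity"
    unfolding extensible_def using comm_group_roots_of_unity satisfies_hypothesis_roots_of_unity by blast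
  from assms(6) show False
  proof
    assume "k1 G U \<inter> derived G (carrier G) \<noteq> {\<one>\<^bsub>G\<^esub>} \<and> k1 G U \<subseteq> group_center G"
    moreover have "inv_into (carrier G) \<phi> \<in> hom G G"
      using group.iso_set_sym[OF assms(1,3)] by (rule iso_imp_homomorphism)
    ultimately show False
      using k1_central_not_A_extensible[OF assms(1,2,4)] twisted_diag_inv_into[OF assms(3,5)] ext
      by blast
  next
    assume "k2 G U \<inter> derived G (carrier G) \<noteq> {\<one>\<^bsub>G\<^esub>} \<and> k2 G U \<subseteq> group_center G"
    moreover have "(\<phi> g, g) \<in> prod.swap ` U" if "g \<in> carrier G" for g
      using assms(5) that unfolding twisted_diag_def by force
    ultimately show False
      using k1_central_not_A_extensible[OF assms(1,2) subgroup_swap[OF assms(1,4)]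
          iso_imp_homomorphism[OF assms(3)]] A_extensible_swap[OF ext] by (auto simp: k1_swap)
  qed
qed

end
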